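(* In the setting of the context, run top-$k$ constrained beam search ($k$-CBS) with beam width $B$, and let $F$ denote either its final candidate set $C_T$ or the subset $F_{(B)}\subseteq C_T$ of the (at most) $B$ pairs of $C_T$ with the largest second coordinate. Let $\mathsf{dist}\in\{\mathsf{Hamming},\mathsf{Levenshtein}\}$, $\varepsilon\ge0$, and define $$\mathrm{LB}_{\varepsilon,\mathsf{dist}}=\sum_{(\mathbf{z}_{\mathrm{pre}}\Vert\mathbf{x},\,\ell)\in F\,:\,\mathbf{x}\in\mathbb{B}^{\mathsf{dist}}_{\varepsilon}(\mathbf{z}_{\mathrm{suf}})}\exp(\ell),\quad \mathrm{covered}(F)=\sum_{(\cdot,\ell)\in F}\exp(\ell),\quad \mathrm{UB}_{\varepsilon,\mathsf{dist}}=\mathrm{LB}_{\varepsilon,\mathsf{dist}}+\bigl(1-\mathrm{covered}(F)\bigr).$$ Then $p^{\mathsf{dist}}_{\mathbf{z},\varepsilon}\le\mathrm{UB}_{\varepsilon,\mathsf{dist}}$.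
   Context: Let $\mathbb{V}$ be a finite vocabulary containing a designated end-of-sequence token EOS. A language model $\theta$ assigns to every finite token sequence (history) $\mathbf{h}$ a probability distribution $\Pr_\theta(\cdot\mid\mathbf{h})$ on $\mathbb{V}$ with $\Pr_\theta(v\mid\mathbf{h})>0$ for all $v$. For an integer $k\ge1$ and a history $\mathbf{h}$, let $S(\mathbf{h})\subseteq\mathbb{V}$ be the set of $k$ tokens with the largest values of $\Pr_\theta(\cdot\mid\mathbf{h})$ (ties broken by a fixed deterministic rule). The top-$k$ decoding distribution is $\Pr_{\theta,\phi}(v\mid\mathbf{h})=\Pr_\theta(v\mid\mathbf{h})/\sum_{u\in S(\mathbf{h})}\Pr_\theta(u\mid\mathbf{h})$ for $v\in S(\mathbf{h})$ and $0$ otherwise. Fix a prefix $\mathbf{z}_{\mathrm{pre}}\in\mathbb{V}^L$ and a target suffix $\mathbf{z}_{\mathrm{suf}}\in\mathbb{V}^T$. For $\mathbf{x}\in\mathbb{V}^T$, $\Pr_{\theta,\phi}(\mathbf{x}\mid\mathbf{z}_{\mathrm{pre}})=\prod_{t=1}^T\Pr_{\theta,\phi}(x_t\mid\mathbf{z}_{\mathrm{pre}}\Vert x_{1:t-1})$ ($\Vert$ is concatenation). For $\mathbf{b},\mathbf{c}\in\mathbb{V}^T$, $\mathsf{Hamming}(\mathbf{b},\mathbf{c})=\#\{t: b_t\ne c_t\}$ and $\mathsf{Levenshtein}(\mathbf{b},\mathbf{c})$ is the minimum number of unit-cost single-token substitutions, insertions and deletions transforming $\mathbf{b}$ into $\mathbf{c}$.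 The $\varepsilon$-ball is $\mathbb{B}^{\mathsf{dist}}_{\varepsilon}(\mathbf{z}_{\mathrm{suf}})=\{\mathbf{v}\in\mathbb{V}^T:\mathsf{dist}(\mathbf{v},\mathbf{z}_{\mathrm{suf}})\le\varepsilon\}$, and $p^{\mathsf{dist}}_{\mathbf{z},\varepsilon}=\sum_{\mathbf{v}\in\mathbb{B}^{\mathsf{dist}}_{\varepsilon}(\mathbf{z}_{\mathrm{suf}})}\Pr_{\theta,\phi}(\mathbf{v}\mid\mathbf{z}_{\mathrm{pre}})$. $k$-CBS with beam width $B$: set $L_0=\{(\mathbf{z}_{\mathrm{pre}},0)\}$. For $t=1,\dots,T$: let $C_t=\{(\mathbf{h}\Vert v,\ \ell+\log\Pr_{\theta,\phi}(v\mid\mathbf{h})):(\mathbf{h},\ell)\in L_{t-1},\ v\in S(\mathbf{h})\}$. If $t=T$, output $C_T$. If $t<T$, delete from $C_t$ every pair whose history ends in EOS, and let $L_t$ be the (at most) $B$ pairs of $C_t$ with the largest second coordinate (deterministic tie-breaking). Every pair in $C_T$ has the form $(\mathbf{z}_{\mathrm{pre}}\Vert\mathbf{x},\ell)$ with $\mathbf{x}\in\mathbb{V}^T$. *)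

theory Defs
  imports Main Complex_Main
begin

definition hamming :: "'v list \<Rightarrow> 'v list \<Rightarrow> nat" where
  "hamming b c = card {t. t < length b \<and> b ! t \<noteq> c ! t}"

definition edit1 :: "'v list \<Rightarrow> 'v list \<Rightarrow> bool" where
  "edit1 xs ys \<longleftrightarrow>
     (\<exists>u w a b. xs = u @ a # w \<and> ys = u @ b # w) \<or>
     (\<exists>u w a. xs = u @ w \<and> ys = u @ a # w) \<or>
     (\<exists>u w a. xs = u @ a # w \<and> ys = u @ w)"

definition levenshtein :: "'v list \<Rightarrow> 'v list \<Rightarrow> nat" where
  "levenshtein b c = (LEAST n. (edit1 ^^ n) b c)"

text \<open>Top-k renormalised distribution; S h is the top-k set at history h.\<close>
definition pphi :: "('v list \<Rightarrow> 'v \<Rightarrow> real) \<Rightarrow> ('v list \<Rightarrow> 'v set) \<Rightarrow> 'v list \<Rightarrow> 'v \<Rightarrow> real" where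
  "pphi \<theta> S h v = (if v \<in> S h then \<theta> h v / (\<Sum>u\<in>S h. \<theta> h u) else 0)"

definition seq_prob :: "('v list \<Rightarrow> 'v \<Rightarrow> real) \<Rightarrow> ('v list \<Rightarrow> 'v set) \<Rightarrow> 'v list \<Rightarrow> 'v list \<Rightarrow> real" where
  "seq_prob \<theta> S zpre x = (\<Prod>t<length x. pphi \<theta> S (zpre @ take t x) (x ! t))"

definition ball_dist :: "('v list \<Rightarrow> 'v list \<Rightarrow> nat) \<Rightarrow> real \<Rightarrow> 'v list \<Rightarrow> 'v list set" where
  "ball_dist dst \<epsilon> zsuf = {v. length v = length zsuf \<and> real (dst v zsuf) \<le> \<epsilon>}"

definition p_ball :: "('v list \<Rightarrow> 'v \<Rightarrow> real) \<Rightarrow> ('v list \<Rightarrow> 'v set) \<Rightarrow> ('v list \<Rightarrow> 'v list \<Rightarrow> nat)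
    \<Rightarrow> real \<Rightarrow> 'v list \<Rightarrow> 'v list \<Rightarrow> real" where
  "p_ball \<theta> S dst \<epsilon> zpre zsuf = (\<Sum>v\<in>ball_dist dst \<epsilon> zsuf. seq_prob \<theta> S zpre v)"

definition cand :: "('v list \<Rightarrow> 'v \<Rightarrow> real) \<Rightarrow> ('v list \<Rightarrow> 'v set)
    \<Rightarrow> ('v list \<times> real) set \<Rightarrow> ('v list \<times> real) set" where
  "cand \<theta> S L = {(h @ [v], l + ln (pphi \<theta> S h v)) | h l v. (h, l) \<in> L \<and> v \<in> S h}"

text \<open>Beams L_n; sel is the (deterministic) top-B selection on the second coordinate.\<close>
fun beam :: "('v list \<Rightarrow> 'v \<Rightarrow> real) \<Rightarrow> ('v list \<Rightarrow> 'v set)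
    \<Rightarrow> (('v list \<times> real) set \<Rightarrow> ('v list \<times> real) set) \<Rightarrow> 'v \<Rightarrow> 'v list \<Rightarrow> nat
    \<Rightarrow> ('v list \<times> real) set" where
  "beam \<theta> S sel eos zpre 0 = {(zpre, 0)}"
| "beam \<theta> S sel eos zpre (Suc n) =
     sel {p \<in> cand \<theta> S (beam \<theta> S sel eos zpre n). last (fst p) \<noteq> eos}"

text \<open>Final candidate set C_T (for T \<ge> 1).\<close>
definition final_cands :: "('v list \<Rightarrow> 'v \<Rightarrow> real) \<Rightarrow> ('v list \<Rightarrow> 'v set)
    \<Rightarrow> (('v list \<times> real) set \<Rightarrow> ('v list \<times> real) set) \<Rightarrow> 'v \<Rightarrow> 'v list \<Rightarrow> nat
    \<Rightarrow> ('v list \<times> real) set" where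
  "final_cands \<theta> S sel eos zpre T = cand \<theta> S (beam \<theta> S sel eos zpre (T - 1))"

definition LB :: "('v list \<times> real) set \<Rightarrow> ('v list \<Rightarrow> 'v list \<Rightarrow> nat) \<Rightarrow> real
    \<Rightarrow> 'v list \<Rightarrow> 'v list \<Rightarrow> real" where
  "LB F dst \<epsilon> zpre zsuf =
     (\<Sum>p\<in>{p\<in>F. \<exists>x. fst p = zpre @ x \<and> x \<in> ball_dist dst \<epsilon> zsuf}. exp (snd p))"

definition covered :: "('v list \<times> real) set \<Rightarrow> real" where
  "covered F = (\<Sum>p\<in>F. exp (snd p))"

definition UB :: "('v list \<times> real) set \<Rightarrow> ('v list \<Rightarrow> 'v list \<Rightarrow> nat) \<Rightarrow> real
    \<Rightarrow> 'v list \<Rightarrow> 'v list \<Rightarrow> real" where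
  "UB F dst \<epsilon> zpre zsuf = LB F dst \<epsilon> zpre zsuf + (1 - covered F)"

end

theory Submission
  imports Defs
begin

text \<open>Every pair in the final candidate set C_T, and hence in any subset of it, has the form
  (z_pre @ x, log Pr(x)) for a sequence x of length T, and distinct pairs come from distinct x.
  So covered(F) is the probability mass of the set X of these continuations and LB is the
  mass of X \<inter> ball. The mass of the ball splits into its part inside X, which is LB, and its
  part outside X, which is at most the total mass 1 - covered(F) of the sequences outside X.\<close>

lemma pphi_nonneg:
  assumes pos: "\<And>h v. \<theta> h v > 0"
  shows "pphi \<theta> S h v \<ge> 0"
  unfolding pphi_def using pos by (simp add: less_imp_le sum_nonneg)

lemma pphi_pos:
  fixes \<theta> :: "'v::finite list \<Rightarrow> 'v \<Rightarrow> real"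
  assumes pos: "\<And>h v. \<theta> h v > 0" and "v \<in> S h"
  shows "pphi \<theta> S h v > 0"
proof -
  have "(\<Sum>u\<in>S h. \<theta> h u) > 0" using assms by (intro sum_pos) auto
  then show ?thesis using assms unfolding pphi_def by simp
qed

lemma sum_pphi_UNIV:
  fixes \<theta> :: "'v::finite list \<Rightarrow> 'v \<Rightarrow> real"
  assumes pos: "\<And>h v. \<theta> h v > 0" and ne: "S h \<noteq> {}"
  shows "(\<Sum>v\<in>UNIV. pphi \<theta> S h v) = 1"
proof -
  have "(\<Sum>v\<in>UNIV. pphi \<theta> S h v) = (\<Sum>v\<in>S h. \<theta> h v / (\<Sum>u\<in>S h. \<theta> h u))"
    by (simp add: pphi_def[abs_def] sum.If_cases)
  also have "\<dots> = (\<Sum>v\<in>S h. \<theta> h v) / (\<Sum>u\<in>S h. \<theta> h u)"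
    by (rule sum_divide_distrib[symmetric])
  also have "(\<Sum>u\<in>S h. \<theta> h u) > 0" using ne pos by (intro sum_pos) auto
  then have "(\<Sum>v\<in>S h. \<theta> h v) / (\<Sum>u\<in>S h. \<theta> h u) = 1" by simp
  finally show ?thesis .
qed

lemma seq_prob_snoc:
  "seq_prob \<theta> S zpre (x @ [v]) = seq_prob \<theta> S zpre x * pphi \<theta> S (zpre @ x) v"
  unfolding seq_prob_def by (simp add: prod.lessThan_Suc nth_append)

lemma seq_prob_nonneg:
  assumes pos: "\<And>h v. \<theta> h v > 0"
  shows "seq_prob \<theta> S zpre x \<ge> 0"
  unfolding seq_prob_def using pphi_nonneg[OF pos] by (intro prod_nonneg) auto

lemma lists_length_Suc_eq_snoc_image:
  "{xs. length xs = Suc n} = (\<lambda>(xs, v). xs @ [v]) ` ({xs. length xs = n} \<times> UNIV)"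
  by (auto simp: length_Suc_conv_rev)

lemma finite_lists_length:
  "finite {xs :: 'v::finite list. length xs = n}"
  using finite_lists_length_eq[of "UNIV :: 'v set" n] by simp

lemma sum_seq_prob_length:
  fixes \<theta> :: "'v::finite list \<Rightarrow> 'v \<Rightarrow> real"
  assumes pos: "\<And>h v. \<theta> h v > 0" and ne: "\<And>h. S h \<noteq> {}"
  shows "(\<Sum>x\<in>{x. length x = n}. seq_prob \<theta> S zpre x) = 1"
proof (induction n)
  case 0
  have "{x :: 'v list. length x = 0} = {[]}" by auto
  then show ?case by (simp add: seq_prob_def)
next
  case (Suc n)
  have inj: "inj_on (\<lambda>(xs, v). xs @ [v]) ({xs :: 'v list. length xs = n} \<times> UNIV)"
    by (auto simp: inj_on_def)
  have "(\<Sum>x\<in>{x. length x = Suc n}. seq_prob \<theta> S zpre x)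
      = (\<Sum>x\<in>{x. length x = n}. \<Sum>v\<in>UNIV. seq_prob \<theta> S zpre x * pphi \<theta> S (zpre @ x) v)"
    unfolding lists_length_Suc_eq_snoc_image sum.reindex[OF inj] sum.cartesian_product
    by (simp add: seq_prob_snoc case_prod_unfold)
  also have "\<dots> = (\<Sum>x\<in>{x. length x = n}. seq_prob \<theta> S zpre x)"
    by (simp add: sum_distrib_left[symmetric] sum_pphi_UNIV[OF pos ne])
  finally show ?case using Suc by simp
qed

definition scored :: "('v list \<Rightarrow> 'v \<Rightarrow> real) \<Rightarrow> ('v list \<Rightarrow> 'v set) \<Rightarrow> 'v list
    \<Rightarrow> 'v list \<Rightarrow> 'v list \<times> real" where
  "scored \<theta> S zpre x = (zpre @ x, ln (seq_prob \<theta> S zpre x))"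

definition prob_scored :: "('v list \<Rightarrow> 'v \<Rightarrow> real) \<Rightarrow> ('v list \<Rightarrow> 'v set) \<Rightarrow> 'v list \<Rightarrow> nat
    \<Rightarrow> ('v list \<times> real) set \<Rightarrow> bool" where
  "prob_scored \<theta> S zpre n L \<longleftrightarrow>
     L \<subseteq> scored \<theta> S zpre ` {x. length x = n \<and> seq_prob \<theta> S zpre x > 0}"

lemma inj_scored: "inj (scored \<theta> S zpre)"
  by (rule injI) (simp add: scored_def)

lemma prob_scored_subset:
  "prob_scored \<theta> S zpre n L \<Longrightarrow> L' \<subseteq> L \<Longrightarrow> prob_scored \<theta> S zpre n L'"
  unfolding prob_scored_def by blast

lemma finite_prob_scored:
  fixes \<theta> :: "'v::finite list \<Rightarrow> 'v \<Rightarrow> real"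
  assumes "prob_scored \<theta> S zpre n L"
  shows "finite L"
proof (rule finite_subset)
  show "L \<subseteq> scored \<theta> S zpre ` {x. length x = n}"
    using assms unfolding prob_scored_def by blast
  show "finite (scored \<theta> S zpre ` {x. length x = n})"
    by (intro finite_imageI finite_lists_length)
qed

lemma prob_scored_cand:
  fixes \<theta> :: "'v::finite list \<Rightarrow> 'v \<Rightarrow> real"
  assumes pos: "\<And>h v. \<theta> h v > 0" and L: "prob_scored \<theta> S zpre n L"
  shows "prob_scored \<theta> S zpre (Suc n) (cand \<theta> S L)"
  unfolding prob_scored_def
proof
  fix p assume "p \<in> cand \<theta> S L"
  then obtain h l v where p: "p = (h @ [v], l + ln (pphi \<theta> S h v))" "(h, l) \<in> L" "v \<in> S h"
    unfolding cand_def by blast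
  then obtain x where x: "length x = n" "seq_prob \<theta> S zpre x > 0" "(h, l) = scored \<theta> S zpre x"
    using L unfolding prob_scored_def by blast
  have "pphi \<theta> S h v > 0" using pos p(3) by (rule pphi_pos)
  then have "seq_prob \<theta> S zpre (x @ [v]) > 0" "p = scored \<theta> S zpre (x @ [v])"
    using p x by (auto simp: scored_def seq_prob_snoc ln_mult)
  then show "p \<in> scored \<theta> S zpre ` {x. length x = Suc n \<and> seq_prob \<theta> S zpre x > 0}"
    using x(1) by auto
qed

lemma prob_scored_beam:
  fixes \<theta> :: "'v::finite list \<Rightarrow> 'v \<Rightarrow> real"
  assumes pos: "\<And>h v. \<theta> h v > 0" and sel_sub: "\<And>X. finite X \<Longrightarrow> sel X \<subseteq> X"
  shows "prob_scored \<theta> S zpre n (beam \<theta> S sel eos zpre n)"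
proof (induction n)
  case 0
  have "(zpre, 0) = scored \<theta> S zpre []" by (simp add: scored_def seq_prob_def)
  then show ?case unfolding prob_scored_def by (force simp: seq_prob_def)
next
  case (Suc n)
  let ?C = "{p \<in> cand \<theta> S (beam \<theta> S sel eos zpre n). last (fst p) \<noteq> eos}"
  have "prob_scored \<theta> S zpre (Suc n) ?C"
    using prob_scored_cand[OF pos Suc] by (rule prob_scored_subset) auto
  moreover from this have "sel ?C \<subseteq> ?C" by (intro sel_sub finite_prob_scored)
  ultimately show ?case by (simp add: prob_scored_subset)
qed

lemma prob_scored_final_cands:
  fixes \<theta> :: "'v::finite list \<Rightarrow> 'v \<Rightarrow> real"
  assumes pos: "\<And>h v. \<theta> h v > 0" and sel_sub: "\<And>X. finite X \<Longrightarrow> sel X \<subseteq> X" and "T \<ge> 1"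
  shows "prob_scored \<theta> S zpre T (final_cands \<theta> S sel eos zpre T)"
proof -
  have "prob_scored \<theta> S zpre (T - 1) (beam \<theta> S sel eos zpre (T - 1))"
    by (rule prob_scored_beam[OF pos sel_sub])
  from prob_scored_cand[OF pos this] show ?thesis
    using \<open>T \<ge> 1\<close> by (simp add: final_cands_def)
qed

lemma covered_scored_image:
  assumes "\<And>x. x \<in> X \<Longrightarrow> seq_prob \<theta> S zpre x > 0"
  shows "covered (scored \<theta> S zpre ` X) = (\<Sum>x\<in>X. seq_prob \<theta> S zpre x)"
  unfolding covered_def sum.reindex[OF inj_on_subset[OF inj_scored subset_UNIV]]
  using assms by (simp add: scored_def)

lemma LB_scored_image:
  assumes "\<And>x. x \<in> X \<Longrightarrow> seq_prob \<theta> S zpre x > 0"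
  shows "LB (scored \<theta> S zpre ` X) dst \<epsilon> zpre zsuf
    = (\<Sum>x\<in>X \<inter> ball_dist dst \<epsilon> zsuf. seq_prob \<theta> S zpre x)"
proof -
  have "{p \<in> scored \<theta> S zpre ` X. \<exists>x. fst p = zpre @ x \<and> x \<in> ball_dist dst \<epsilon> zsuf}
      = scored \<theta> S zpre ` (X \<inter> ball_dist dst \<epsilon> zsuf)"
    by (auto simp: scored_def)
  then show ?thesis
    unfolding LB_def using assms covered_scored_image[of "X \<inter> ball_dist dst \<epsilon> zsuf"]
    by (simp add: covered_def)
qed

lemma sum_le_sum_Int_add_sum_diff:
  fixes f :: "'a \<Rightarrow> real"
  assumes "finite A" "Y \<subseteq> A" "\<And>x. x \<in> A \<Longrightarrow> f x \<ge> 0"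
  shows "sum f Y \<le> sum f (X \<inter> Y) + sum f (A - X)"
proof -
  have "finite Y" using assms(1,2) by (rule finite_subset[rotated])
  then have "sum f Y = sum f (Y \<inter> X) + sum f (Y - X)" by (rule sum.Int_Diff)
  also have "sum f (Y - X) \<le> sum f (A - X)"
    using assms by (intro sum_mono2) auto
  finally show ?thesis by (simp add: Int_commute)
qed

lemma p_ball_le_UB:
  fixes \<theta> :: "'v::finite list \<Rightarrow> 'v \<Rightarrow> real"
  assumes pos: "\<And>h v. \<theta> h v > 0" and ne: "\<And>h. S h \<noteq> {}"
    and F: "prob_scored \<theta> S zpre (length zsuf) F"
  shows "p_ball \<theta> S dst \<epsilon> zpre zsuf \<le> UB F dst \<epsilon> zpre zsuf"
proof -
  define A where "A = {x :: 'v list. length x = length zsuf}"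
  define f where "f = seq_prob \<theta> S zpre"
  define Ball where "Ball = ball_dist dst \<epsilon> zsuf"
  have finA: "finite A" unfolding A_def by (rule finite_lists_length)
  obtain X where XA: "X \<subseteq> A" and f_pos: "\<And>x. x \<in> X \<Longrightarrow> f x > 0"
    and F_eq: "F = scored \<theta> S zpre ` X"
    using F unfolding prob_scored_def subset_image_iff A_def f_def by blast
  have "p_ball \<theta> S dst \<epsilon> zpre zsuf = sum f Ball"
    by (simp add: p_ball_def f_def Ball_def)
  also have "\<dots> \<le> sum f (X \<inter> Ball) + sum f (A - X)"
    using finA seq_prob_nonneg[OF pos]
    by (intro sum_le_sum_Int_add_sum_diff) (auto simp: A_def Ball_def ball_dist_def f_def)
  also have "sum f (A - X) = 1 - sum f X"
    using sum.subset_diff[OF XA finA, of f]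
      sum_seq_prob_length[of \<theta> S, OF pos ne, where n = "length zsuf" and zpre = zpre]
    by (simp add: A_def f_def)
  finally show ?thesis
    using f_pos unfolding UB_def F_eq f_def Ball_def
    by (simp add: LB_scored_image covered_scored_image)
qed

theorem proposition2:
  fixes \<theta> :: "'v::finite list \<Rightarrow> 'v \<Rightarrow> real"
    and S :: "'v list \<Rightarrow> 'v set"
    and sel :: "('v list \<times> real) set \<Rightarrow> ('v list \<times> real) set"
    and eos :: 'v and k B T :: nat
    and zpre zsuf :: "'v list" and \<epsilon> :: real
    and dst :: "'v list \<Rightarrow> 'v list \<Rightarrow> nat"
  assumes pos: "\<And>h v. \<theta> h v > 0"
    and norm: "\<And>h. (\<Sum>v\<in>UNIV. \<theta> h v) = 1"
    and k: "k \<ge> 1"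
    and S_card: "\<And>h. card (S h) = min k (card (UNIV :: 'v set))"
    and S_top: "\<And>h v u. v \<in> S h \<Longrightarrow> u \<notin> S h \<Longrightarrow> \<theta> h u \<le> \<theta> h v"
    and B: "B \<ge> 1"
    and sel_sub: "\<And>X. finite X \<Longrightarrow> sel X \<subseteq> X"
    and sel_card: "\<And>X. finite X \<Longrightarrow> card (sel X) = min B (card X)"
    and sel_top: "\<And>X p q. finite X \<Longrightarrow> p \<in> sel X \<Longrightarrow> q \<in> X - sel X \<Longrightarrow> snd q \<le> snd p"
    and T: "T \<ge> 1" "length zsuf = T"
    and eps: "\<epsilon> \<ge> 0"
    and dst_choice: "dst \<in> {hamming, levenshtein}"
    and F: "F \<in> {final_cands \<theta> S sel eos zpre T, sel (final_cands \<theta> S sel eos zpre T)}"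
  shows "p_ball \<theta> S dst \<epsilon> zpre zsuf \<le> UB F dst \<epsilon> zpre zsuf"
proof -
  have ne: "S h \<noteq> {}" for h
    using S_card[of h] k finite_UNIV_card_ge_0[where 'a = 'v] by auto
  let ?C = "final_cands \<theta> S sel eos zpre T"
  have C: "prob_scored \<theta> S zpre T ?C"
    using prob_scored_final_cands[OF pos sel_sub T(1)] .
  then have "F \<subseteq> ?C" using F sel_sub[OF finite_prob_scored[OF C]] by auto
  with C have "prob_scored \<theta> S zpre (length zsuf) F"
    unfolding T(2) by (rule prob_scored_subset)
  then show ?thesis by (rule p_ball_le_UB[OF pos ne])
qed

end
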